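(* For $i=1,2$ let $\alpha_i\in[-1,1]$ and let $f_{\alpha_i}=h_{\alpha_i}+\overline{g_{\alpha_i}}\in S_H$ with $h_{\alpha_i}(z)+g_{\alpha_i}(z)=\dfrac{z(1-\alpha_i z)}{1-z^2}$ (the two maps may have different dilatations). If $\alpha_1=\alpha_2$, then for every $0\le t\le1$ the map $f=tf_{\alpha_1}+(1-t)f_{\alpha_2}$ belongs to $S_H$ and maps $E$ onto a domain convex in the direction of the imaginary axis.
   Context: $E=\{z\in\mathbb{C}:|z|<1\}$. A harmonic mapping $f=h+\overline{g}$ on $E$ (with $h,g$ analytic) is locally univalent and sense-preserving iff $h'\neq0$ in $E$ and its dilatation $\omega=g'/h'$ satisfies $|\omega|<1$ in $E$. $S_H$ denotes the class of harmonic, univalent, sense-preserving mappings $f=h+\overline{g}$ of $E$ normalized by $f(0)=0$, $f_z(0)=1$. A domain $\Omega$ is convex in the direction of the imaginary axis if every line parallel to the imaginary axis has connected or empty intersection with $\Omega$. *)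

theory Defs
  imports "HOL-Analysis.Analysis"
begin

abbreviation unit_disk :: "complex set" where
  "unit_disk \<equiv> ball 0 1"

definition harm :: "(complex \<Rightarrow> complex) \<Rightarrow> (complex \<Rightarrow> complex) \<Rightarrow> complex \<Rightarrow> complex" where
  "harm h g z = h z + cnj (g z)"

definition sense_preserving :: "(complex \<Rightarrow> complex) \<Rightarrow> (complex \<Rightarrow> complex) \<Rightarrow> bool" where
  "sense_preserving h g \<longleftrightarrow>
     (\<forall>z\<in>unit_disk. deriv h z \<noteq> 0 \<and> cmod (deriv g z / deriv h z) < 1)"

definition S_H :: "(complex \<Rightarrow> complex) \<Rightarrow> (complex \<Rightarrow> complex) \<Rightarrow> bool" where
  "S_H h g \<longleftrightarrow>
     h holomorphic_on unit_disk \<and> g holomorphic_on unit_disk \<and>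
     inj_on (harm h g) unit_disk \<and> sense_preserving h g \<and>
     h 0 = 0 \<and> g 0 = 0 \<and> deriv h 0 = 1"

definition convex_imag_dir :: "complex set \<Rightarrow> bool" where
  "convex_imag_dir \<Omega> \<longleftrightarrow> (\<forall>c::real. connected (\<Omega> \<inter> {w. Re w = c}))"

end

theory Submission
  imports Defs
begin

text \<open>Since \<open>\<alpha>1 = \<alpha>2\<close>, both \<open>h\<^sub>i + g\<^sub>i\<close> and hence \<open>h + g\<close> equal
  \<open>\<phi>\<^sub>\<alpha> z = z (1 - \<alpha> z) / (1 - z\<^sup>2)\<close>. In the variable \<open>w = (1 + z) / (1 - z)\<close>, \<open>\<phi>\<^sub>\<alpha>\<close> is an
  affine image of \<open>\<psi> w = (1 - \<alpha>) w - (1 + \<alpha>) / w\<close>, which maps the right half-plane injectively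
  onto a domain meeting every vertical line in an interval.
  Sense preservation \<open>|g'| < |h'|\<close> means \<open>Re ((h' - g') cnj (h' + g')) > 0\<close>, which for fixed
  \<open>h' + g'\<close> is linear in \<open>h' - g'\<close> and so survives the convex combination.
  Then the shear construction of Clunie and Sheil-Small applies: \<open>f\<close> has the real part of
  \<open>h + g\<close> and the imaginary part of \<open>h - g\<close>, and along the preimage of a vertical segment in
  \<open>(h + g)(E)\<close> the derivative of \<open>Im (h - g)\<close> is \<open>Im (d (h' - g') / (h' + g'))\<close> with \<open>d\<close> purely
  imaginary, which never vanishes.\<close>

section \<open>Dilatation of convex combinations\<close>

lemma Re_mult_cnj_diff_sum:
  fixes H G :: complex
  shows "Re ((H - G) * cnj (H + G)) = (cmod H)\<^sup>2 - (cmod G)\<^sup>2"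
  unfolding cmod_power2 by (simp add: algebra_simps power2_eq_square)

lemma dilatation_lt_1_iff:
  fixes H G :: complex
  shows "H \<noteq> 0 \<and> cmod (G / H) < 1 \<longleftrightarrow> Re ((H - G) * cnj (H + G)) > 0"
proof -
  have "H \<noteq> 0 \<and> cmod (G / H) < 1 \<longleftrightarrow> cmod G < cmod H"
    by (auto simp: norm_divide divide_less_eq)
  also have "\<dots> \<longleftrightarrow> (cmod G)\<^sup>2 < (cmod H)\<^sup>2"
    by (meson norm_ge_zero not_le power_mono_iff zero_less_numeral)
  also have "\<dots> \<longleftrightarrow> Re ((H - G) * cnj (H + G)) > 0"
    unfolding Re_mult_cnj_diff_sum by simp
  finally show ?thesis .
qed

lemma dilatation_lt_1_convex_combination:
  fixes H1 G1 H2 G2 :: complex and t :: real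
  assumes "H1 + G1 = H2 + G2" and "0 \<le> t" "t \<le> 1"
    and "H1 \<noteq> 0" "cmod (G1 / H1) < 1" and "H2 \<noteq> 0" "cmod (G2 / H2) < 1"
  shows "of_real t * H1 + of_real (1 - t) * H2 \<noteq> 0
    \<and> cmod ((of_real t * G1 + of_real (1 - t) * G2) / (of_real t * H1 + of_real (1 - t) * H2)) < 1"
proof -
  define H where "H = of_real t * H1 + of_real (1 - t) * H2"
  define G where "G = of_real t * G1 + of_real (1 - t) * G2"
  define S where "S = H1 + G1"
  have pos1: "Re ((H1 - G1) * cnj S) > 0"
    unfolding S_def using assms(4,5) dilatation_lt_1_iff by blast
  have pos2: "Re ((H2 - G2) * cnj S) > 0"
    unfolding S_def assms(1) using assms(6,7) dilatation_lt_1_iff by blast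
  have "H + G = of_real t * (H1 + G1) + of_real (1 - t) * (H2 + G2)"
    unfolding H_def G_def by (simp add: algebra_simps)
  also have "\<dots> = S"
    unfolding S_def assms(1) by (simp flip: distrib_right of_real_add)
  finally have sum: "H + G = S" .
  have "Re ((H - G) * cnj S) = t * Re ((H1 - G1) * cnj S) + (1 - t) * Re ((H2 - G2) * cnj S)"
    unfolding H_def G_def by (simp add: algebra_simps)
  also have "\<dots> > 0"
    using pos1 pos2 assms(2,3) by (cases "t = 0") (auto intro: add_pos_nonneg)
  finally have "Re ((H - G) * cnj (H + G)) > 0"
    unfolding sum .
  thus ?thesis
    unfolding H_def G_def dilatation_lt_1_iff .
qed

lemma deriv_convex_combination:
  fixes f1 f2 :: "complex \<Rightarrow> complex" and t :: real
  assumes "f1 holomorphic_on S" "f2 holomorphic_on S" "open S" "z \<in> S"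
  shows "deriv (\<lambda>z. of_real t * f1 z + of_real (1 - t) * f2 z) z
    = of_real t * deriv f1 z + of_real (1 - t) * deriv f2 z"
  using holomorphic_on_imp_differentiable_at[OF assms(1,3,4)]
    holomorphic_on_imp_differentiable_at[OF assms(2,3,4)]
  by (simp add: field_differentiable_mult del: of_real_diff)

lemma sense_preserving_convex_combination:
  fixes h1 g1 h2 g2 :: "complex \<Rightarrow> complex" and t :: real
  assumes "h1 holomorphic_on unit_disk" "g1 holomorphic_on unit_disk"
    and "h2 holomorphic_on unit_disk" "g2 holomorphic_on unit_disk"
    and "\<And>z. z \<in> unit_disk \<Longrightarrow> h1 z + g1 z = h2 z + g2 z"
    and "sense_preserving h1 g1" "sense_preserving h2 g2" and "0 \<le> t" "t \<le> 1"
  shows "sense_preserving (\<lambda>z. of_real t * h1 z + of_real (1 - t) * h2 z)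
                          (\<lambda>z. of_real t * g1 z + of_real (1 - t) * g2 z)"
  unfolding sense_preserving_def
proof
  fix z :: complex assume z: "z \<in> unit_disk"
  have "deriv (\<lambda>w. h1 w + g1 w) z = deriv (\<lambda>w. h2 w + g2 w) z"
    using z assms(5) by (intro deriv_cong_ev) (auto simp: eventually_nhds intro!: exI[of _ unit_disk])
  hence "deriv h1 z + deriv g1 z = deriv h2 z + deriv g2 z"
    using assms(1-4) z by (simp add: holomorphic_on_imp_differentiable_at)
  moreover have "deriv h1 z \<noteq> 0" "cmod (deriv g1 z / deriv h1 z) < 1"
    and "deriv h2 z \<noteq> 0" "cmod (deriv g2 z / deriv h2 z) < 1"
    using assms(6,7) z unfolding sense_preserving_def by auto
  ultimately show "deriv (\<lambda>z. of_real t * h1 z + of_real (1 - t) * h2 z) z \<noteq> 0 \<and>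
          cmod (deriv (\<lambda>z. of_real t * g1 z + of_real (1 - t) * g2 z) z /
                deriv (\<lambda>z. of_real t * h1 z + of_real (1 - t) * h2 z) z) < 1"
    unfolding deriv_convex_combination[OF assms(1,3) open_ball z]
      deriv_convex_combination[OF assms(2,4) open_ball z]
    using dilatation_lt_1_convex_combination assms(8,9) by presburger
qed

section \<open>Convexity in the direction of the imaginary axis\<close>

definition vertically_convex :: "complex set \<Rightarrow> bool" where
  "vertically_convex \<Omega> \<longleftrightarrow> (\<forall>a\<in>\<Omega>. \<forall>b\<in>\<Omega>. Re a = Re b \<longrightarrow> closed_segment a b \<subseteq> \<Omega>)"

lemma closed_segment_vertical:
  fixes a b \<zeta> :: complex
  assumes "Re a = Re b"
  shows "\<zeta> \<in> closed_segment a b \<longleftrightarrow> Re \<zeta> = Re a \<and> Im \<zeta> \<in> closed_segment (Im a) (Im b)"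
proof
  assume "\<zeta> \<in> closed_segment a b"
  then obtain u where "0 \<le> u" "u \<le> 1" "\<zeta> = (1 - u) *\<^sub>R a + u *\<^sub>R b"
    unfolding closed_segment_def by blast
  hence "Re \<zeta> = (1 - u) * Re a + u * Re b" "Im \<zeta> = (1 - u) * Im a + u * Im b"
    by simp_all
  with assms \<open>0 \<le> u\<close> \<open>u \<le> 1\<close> show "Re \<zeta> = Re a \<and> Im \<zeta> \<in> closed_segment (Im a) (Im b)"
    unfolding closed_segment_def by (auto simp: algebra_simps)
next
  assume "Re \<zeta> = Re a \<and> Im \<zeta> \<in> closed_segment (Im a) (Im b)"
  then obtain u where "0 \<le> u" "u \<le> 1" "Re \<zeta> = Re a" "Im \<zeta> = (1 - u) * Im a + u * Im b"
    unfolding closed_segment_def by auto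
  with assms show "\<zeta> \<in> closed_segment a b"
    unfolding closed_segment_def by (auto simp: complex_eq_iff algebra_simps intro!: exI[of _ u])
qed

lemma vertically_convex_imp_convex_imag_dir:
  assumes "vertically_convex \<Omega>"
  shows "convex_imag_dir \<Omega>"
  unfolding convex_imag_dir_def
proof
  fix c :: real
  have "convex (\<Omega> \<inter> {w. Re w = c})"
    unfolding convex_contains_segment
  proof (intro ballI)
    fix a b assume "a \<in> \<Omega> \<inter> {w. Re w = c}" "b \<in> \<Omega> \<inter> {w. Re w = c}"
    with assms show "closed_segment a b \<subseteq> \<Omega> \<inter> {w. Re w = c}"
      unfolding vertically_convex_def by (auto simp: closed_segment_vertical)
  qed
  thus "connected (\<Omega> \<inter> {w. Re w = c})"
    by (rule convex_connected)
qed

lemma vertically_convex_affine_image: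
  fixes \<Omega> :: "complex set" and a :: real and b :: complex
  assumes "vertically_convex \<Omega>" "a \<noteq> 0"
  shows "vertically_convex ((\<lambda>\<zeta>. of_real a * \<zeta> + b) ` \<Omega>)"
  unfolding vertically_convex_def
proof (intro ballI impI)
  fix x y assume "x \<in> (\<lambda>\<zeta>. of_real a * \<zeta> + b) ` \<Omega>" "y \<in> (\<lambda>\<zeta>. of_real a * \<zeta> + b) ` \<Omega>"
    and "Re x = Re y"
  then obtain \<xi> \<eta> where "\<xi> \<in> \<Omega>" "\<eta> \<in> \<Omega>" "x = of_real a * \<xi> + b" "y = of_real a * \<eta> + b"
    and "Re \<xi> = Re \<eta>"
    using assms(2) by auto
  moreover have "closed_segment (of_real a * \<xi> + b) (of_real a * \<eta> + b)
      = (\<lambda>\<zeta>. of_real a * \<zeta> + b) ` closed_segment \<xi> \<eta>"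
  proof -
    have "closed_segment (of_real a * \<xi> + b) (of_real a * \<eta> + b)
        = (\<lambda>x. b + x) ` closed_segment (of_real a * \<xi>) (of_real a * \<eta>)"
      by (metis add.commute closed_segment_translation)
    also have "\<dots> = (\<lambda>x. b + x) ` (\<lambda>\<zeta>. of_real a * \<zeta>) ` closed_segment \<xi> \<eta>"
      by (simp add: closed_segment_linear_image linear_times)
    finally show ?thesis
      by (simp add: image_image add.commute)
  qed
  ultimately show "closed_segment x y \<subseteq> (\<lambda>\<zeta>. of_real a * \<zeta> + b) ` \<Omega>"
    using assms(1) unfolding vertically_convex_def by (metis image_mono)
qed

section \<open>The shear construction of Clunie and Sheil-Small\<close>

lemma has_real_derivative_Im_along_line:
  fixes G :: "complex \<Rightarrow> complex"
  assumes "(G has_field_derivative G') (at (a + of_real s * d))"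
  shows "((\<lambda>s. Im (G (a + of_real s * d))) has_real_derivative Im (d * G')) (at s)"
proof -
  have "((\<lambda>s::real. a + of_real s * d) has_vector_derivative d) (at s)"
    by (auto intro!: derivative_eq_intros simp: has_vector_derivative_def scaleR_conv_of_real)
  from field_vector_diff_chain_at[OF this assms]
  have "((\<lambda>s. G (a + of_real s * d)) has_derivative (\<lambda>x. x *\<^sub>R (d * G'))) (at s)"
    by (simp add: has_vector_derivative_def o_def)
  from bounded_linear.has_derivative[OF bounded_linear_Im this]
  have "((\<lambda>s. Im (G (a + of_real s * d))) has_derivative (\<lambda>x. Im (x *\<^sub>R (d * G')))) (at s)" .
  moreover have "(\<lambda>x. Im (x *\<^sub>R (d * G'))) = (*) (Im (d * G'))"
    by (auto simp: mult.commute)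
  ultimately show ?thesis
    by (simp add: has_field_derivative_def)
qed

lemma Im_mult_quotient_nonzero:
  fixes d A B :: complex
  assumes "Re d = 0" "d \<noteq> 0" "Re (A * cnj B) > 0"
  shows "Im (d * (A / B)) \<noteq> 0"
proof -
  have "B \<noteq> 0" using assms(3) by auto
  hence "A / B = A * cnj B / (B * cnj B)"
    by (simp add: field_simps)
  hence "A / B = A * cnj B / of_real ((cmod B)\<^sup>2)"
    by (simp only: complex_norm_square)
  hence "Re (A / B) = Re (A * cnj B) / (cmod B)\<^sup>2"
    by (simp add: Re_divide_of_real)
  with assms(3) \<open>B \<noteq> 0\<close> have "Re (A / B) > 0" by simp
  moreover have "Im d \<noteq> 0"
    using assms(1,2) complex_eq_iff by force
  moreover have "Im (d * (A / B)) = Re d * Im (A / B) + Im d * Re (A / B)"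
    by (simp only: times_complex.sel)
  ultimately show ?thesis
    using assms(1) by simp
qed

locale vertical_shear =
  fixes S :: "complex set" and h g :: "complex \<Rightarrow> complex"
  assumes open_domain: "open S"
    and holomorphic_h: "h holomorphic_on S" and holomorphic_g: "g holomorphic_on S"
    and inj_on_sum: "inj_on (\<lambda>z. h z + g z) S"
    and vertically_convex_sum_image: "vertically_convex ((\<lambda>z. h z + g z) ` S)"
    and dilatation_lt_1: "\<And>z. z \<in> S \<Longrightarrow> deriv h z \<noteq> 0 \<and> cmod (deriv g z / deriv h z) < 1"
begin

definition P :: "complex \<Rightarrow> complex" where "P z = h z + g z"

definition F :: "complex \<Rightarrow> complex" where "F z = h z - g z"

lemma Re_harm: "Re (harm h g z) = Re (P z)"
  by (simp add: harm_def P_def)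

lemma Im_harm: "Im (harm h g z) = Im (F z)"
  by (simp add: harm_def F_def)

lemma has_field_derivative_P: "z \<in> S \<Longrightarrow> (P has_field_derivative deriv h z + deriv g z) (at z)"
  unfolding P_def using holomorphic_h holomorphic_g open_domain
  by (intro DERIV_add holomorphic_derivI)

lemma has_field_derivative_F: "z \<in> S \<Longrightarrow> (F has_field_derivative deriv h z - deriv g z) (at z)"
  unfolding F_def using holomorphic_h holomorphic_g open_domain
  by (intro DERIV_diff holomorphic_derivI)

lemma Re_deriv_F_cnj_deriv_P: "z \<in> S \<Longrightarrow> Re ((deriv h z - deriv g z) * cnj (deriv h z + deriv g z)) > 0"
  using dilatation_lt_1 dilatation_lt_1_iff by blast

lemma continuous_on_P: "continuous_on S P"
  using has_field_derivative_P by (meson DERIV_continuous continuous_at_imp_continuous_on)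

lemma open_P_image: "open (P ` S)"
  using invariance_of_domain[OF continuous_on_P open_domain] inj_on_sum
  unfolding P_def[abs_def] by blast

abbreviation P_inv :: "complex \<Rightarrow> complex" where "P_inv \<equiv> inv_into S P"

lemma P_inv_P: "z \<in> S \<Longrightarrow> P_inv (P z) = z"
  using inj_on_sum unfolding P_def[abs_def] by (rule inv_into_f_f)

lemma P_P_inv: "w \<in> P ` S \<Longrightarrow> P_inv w \<in> S \<and> P (P_inv w) = w"
  by (simp add: inv_into_into f_inv_into_f)

lemma has_field_derivative_P_inv:
  assumes "w \<in> P ` S"
  shows "(P_inv has_field_derivative inverse (deriv h (P_inv w) + deriv g (P_inv w))) (at w)"
proof (rule has_field_derivative_inverse_basic[OF _ _ _ open_P_image assms])
  show "(P has_field_derivative deriv h (P_inv w) + deriv g (P_inv w)) (at (P_inv w))"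
    using has_field_derivative_P P_P_inv[OF assms] by blast
  show "deriv h (P_inv w) + deriv g (P_inv w) \<noteq> 0"
  proof
    assume "deriv h (P_inv w) + deriv g (P_inv w) = 0"
    with Re_deriv_F_cnj_deriv_P[of "P_inv w"] P_P_inv[OF assms] show False
      by simp
  qed
  have "continuous_on (P ` S) P_inv"
    by (rule continuous_on_inverse_open[OF open_domain continuous_on_P]) (auto simp: P_inv_P)
  thus "isCont P_inv w"
    using open_P_image assms continuous_on_eq_continuous_at by blast
  show "\<And>z. z \<in> P ` S \<Longrightarrow> P (P_inv z) = z"
    using P_P_inv by blast
qed

definition vertical_lift :: "complex \<Rightarrow> complex \<Rightarrow> real \<Rightarrow> complex" where
  "vertical_lift z1 z2 s = P_inv (P z1 + of_real s * (P z2 - P z1))"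

context
  fixes z1 z2 :: complex
  assumes z1: "z1 \<in> S" and z2: "z2 \<in> S" and same_Re: "Re (P z1) = Re (P z2)"
begin

lemma vertical_segment_in_P_image:
  assumes "s \<in> {0..1}"
  shows "P z1 + of_real s * (P z2 - P z1) \<in> P ` S"
proof -
  have "P z1 + of_real s * (P z2 - P z1) \<in> closed_segment (P z1) (P z2)"
    using assms unfolding closed_segment_def
    by (auto simp: scaleR_conv_of_real algebra_simps intro!: exI[of _ s])
  thus ?thesis
    using vertically_convex_sum_image z1 z2 same_Re
    unfolding vertically_convex_def P_def[abs_def] by blast
qed

lemma vertical_lift_in_domain:
  "s \<in> {0..1} \<Longrightarrow> vertical_lift z1 z2 s \<in> S"
  "s \<in> {0..1} \<Longrightarrow> P (vertical_lift z1 z2 s) = P z1 + of_real s * (P z2 - P z1)"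
  using P_P_inv[OF vertical_segment_in_P_image] unfolding vertical_lift_def by auto

lemma vertical_lift_0: "vertical_lift z1 z2 0 = z1"
  and vertical_lift_1: "vertical_lift z1 z2 1 = z2"
  using P_inv_P z1 z2 by (simp_all add: vertical_lift_def)

lemma has_real_derivative_Im_F_vertical_lift:
  assumes "s \<in> {0..1}"
  defines "w \<equiv> vertical_lift z1 z2 s"
  shows "((\<lambda>s. Im (F (vertical_lift z1 z2 s))) has_real_derivative
           Im ((P z2 - P z1) * ((deriv h w - deriv g w) / (deriv h w + deriv g w)))) (at s)"
proof -
  have "((\<lambda>\<zeta>. F (P_inv \<zeta>)) has_field_derivative
          (deriv h w - deriv g w) * inverse (deriv h w + deriv g w)) (at (P z1 + of_real s * (P z2 - P z1)))"
    using DERIV_chain[OF has_field_derivative_F has_field_derivative_P_inv[OF vertical_segment_in_P_image]]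
      vertical_lift_in_domain(1) assms
    by (simp add: o_def w_def vertical_lift_def)
  from has_real_derivative_Im_along_line[OF this]
  show ?thesis
    by (simp add: vertical_lift_def divide_inverse)
qed

lemma continuous_on_Im_F_vertical_lift:
  "continuous_on {0..1} (\<lambda>s. Im (F (vertical_lift z1 z2 s)))"
  using has_real_derivative_Im_F_vertical_lift
  by (meson DERIV_continuous continuous_at_imp_continuous_on)

lemma Im_F_neq:
  assumes "P z1 \<noteq> P z2"
  shows "Im (F z1) \<noteq> Im (F z2)"
proof
  assume eq: "Im (F z1) = Im (F z2)"
  let ?k = "\<lambda>s. Im (F (vertical_lift z1 z2 s))"
  have "\<exists>s. 0 < s \<and> s < 1 \<and> (?k has_real_derivative 0) (at s)"
  proof (rule Rolle[OF zero_less_one])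
    show "?k 0 = ?k 1"
      using eq by (simp add: vertical_lift_0 vertical_lift_1)
    show "continuous_on {0..1} ?k"
      by (rule continuous_on_Im_F_vertical_lift)
    show "?k differentiable (at s)" if "0 < s" "s < 1" for s
      using has_real_derivative_Im_F_vertical_lift[of s] that
      unfolding real_differentiable_def by auto
  qed
  then obtain s where "0 < s" "s < 1" and k': "(?k has_real_derivative 0) (at s)"
    by blast
  hence s: "s \<in> {0..1}" by simp
  define w where "w = vertical_lift z1 z2 s"
  have "Im ((P z2 - P z1) * ((deriv h w - deriv g w) / (deriv h w + deriv g w))) = 0"
    using DERIV_unique[OF has_real_derivative_Im_F_vertical_lift[OF s] k'] by (simp add: w_def)
  moreover have "Im ((P z2 - P z1) * ((deriv h w - deriv g w) / (deriv h w + deriv g w))) \<noteq> 0"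
  proof (rule Im_mult_quotient_nonzero)
    show "Re (P z2 - P z1) = 0" "P z2 - P z1 \<noteq> 0"
      using same_Re assms by auto
    show "Re ((deriv h w - deriv g w) * cnj (deriv h w + deriv g w)) > 0"
      using Re_deriv_F_cnj_deriv_P vertical_lift_in_domain(1)[OF s] by (simp add: w_def)
  qed
  ultimately show False
    by contradiction
qed

end

theorem inj_on_harm: "inj_on (harm h g) S"
proof
  fix z1 z2 assume z: "z1 \<in> S" "z2 \<in> S" and "harm h g z1 = harm h g z2"
  hence "Re (P z1) = Re (P z2)" "Im (F z1) = Im (F z2)"
    by (metis Re_harm, metis Im_harm)
  with z Im_F_neq have "P z1 = P z2" by blast
  thus "z1 = z2" using z P_inv_P by metis
qed

lemma continuous_on_harm: "continuous_on S (harm h g)"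
  unfolding harm_def using holomorphic_h holomorphic_g
  by (intro continuous_intros holomorphic_on_imp_continuous_on)

lemma open_harm_image: "open (harm h g ` S)"
  by (rule invariance_of_domain[OF continuous_on_harm open_domain inj_on_harm])

theorem vertically_convex_harm_image: "vertically_convex (harm h g ` S)"
  unfolding vertically_convex_def
proof (intro ballI impI subsetI)
  fix a b \<zeta> assume "a \<in> harm h g ` S" "b \<in> harm h g ` S" "Re a = Re b" "\<zeta> \<in> closed_segment a b"
  then obtain z1 z2 where z: "z1 \<in> S" "z2 \<in> S"
    and same_Re: "Re (P z1) = Re (P z2)" and \<zeta>: "Re \<zeta> = Re (P z1)"
      "Im \<zeta> \<in> closed_segment (Im (F z1)) (Im (F z2))"
    by (auto simp: closed_segment_vertical Re_harm Im_harm)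
  let ?k = "\<lambda>s. Im (F (vertical_lift z1 z2 s))"
  have "connected (?k ` {0..1})"
    using continuous_on_Im_F_vertical_lift[OF z same_Re] by (intro connected_continuous_image) auto
  hence "closed_segment (?k 0) (?k 1) \<subseteq> ?k ` {0..1}"
    by (simp add: connected_convex_1 convex_contains_segment)
  then obtain s where s: "s \<in> {0..1}" "Im \<zeta> = ?k s"
    using \<zeta>(2) vertical_lift_0[OF z same_Re] vertical_lift_1[OF z same_Re] by auto
  have "Re (harm h g (vertical_lift z1 z2 s)) = Re \<zeta>"
    using vertical_lift_in_domain(2)[OF z same_Re s(1)] \<zeta>(1) same_Re by (simp add: Re_harm)
  moreover have "Im (harm h g (vertical_lift z1 z2 s)) = Im \<zeta>"
    using s(2) by (simp add: Im_harm)
  ultimately show "\<zeta> \<in> harm h g ` S"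
    using vertical_lift_in_domain(1)[OF z same_Re s(1)] complex_eq_iff by (metis image_eqI)
qed

end

section \<open>The maps \<open>\<psi>\<close> and \<open>\<phi>\<close>\<close>

lemma right_half_plane_mult_neq_neg_real:
  fixes a b :: complex and c :: real
  assumes "Re a > 0" "Re b > 0" "c \<ge> 0"
  shows "a * b \<noteq> - of_real c"
proof
  assume h: "a * b = - of_real c"
  have i: "Re a * Im b + Im a * Re b = 0" using arg_cong[OF h, of Im] by simp
  have r: "Re a * Re b - Im a * Im b = - c" using arg_cong[OF h, of Re] by simp
  have "Im b = - Im a * Re b / Re a" using i assms by (simp add: field_simps)
  hence "Re a * Re b - Im a * Im b = Re a * Re b + (Im a)\<^sup>2 * Re b / Re a"
    by (simp add: power2_eq_square)
  moreover have "(Im a)\<^sup>2 * Re b / Re a \<ge> 0" using assms by simp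
  moreover have "Re a * Re b > 0" using assms by simp
  ultimately show False using r assms by linarith
qed

definition cayley :: "complex \<Rightarrow> complex" where
  "cayley z = (1 + z) / (1 - z)"

lemma unit_disk_nonzero:
  fixes z :: complex assumes "cmod z < 1"
  shows "1 - z \<noteq> 0" "1 + z \<noteq> 0"
  using assms by (auto simp: add_eq_0_iff)

lemma Re_cayley_pos:
  fixes z :: complex assumes "cmod z < 1"
  shows "Re (cayley z) > 0"
proof -
  have "Re (cayley z) = (Re (1 + z) * Re (1 - z) + Im (1 + z) * Im (1 - z)) / (cmod (1 - z))\<^sup>2"
    unfolding cayley_def by (rule Re_divide')
  also have "\<dots> = (1 - (cmod z)\<^sup>2) / (cmod (1 - z))\<^sup>2"
    unfolding cmod_power2 by (simp add: power2_eq_square algebra_simps)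
  finally show ?thesis
    using assms unit_disk_nonzero[OF assms] by (simp add: abs_square_less_1)
qed

lemma cayley_inverse:
  fixes w :: complex assumes "Re w > 0"
  shows "cmod ((w - 1) / (w + 1)) < 1" "cayley ((w - 1) / (w + 1)) = w"
proof -
  have nz: "w + 1 \<noteq> 0" using assms by (metis add_eq_0_iff neg_0_less_iff_less one_complex.sel
      uminus_complex.sel(1) zero_less_one not_less_iff_gr_or_eq)
  have "cmod (w - 1) < cmod (w + 1)"
    using assms by (simp add: cmod_def power2_eq_square algebra_simps)
  thus "cmod ((w - 1) / (w + 1)) < 1" using nz by (simp add: norm_divide divide_less_eq)
  have "1 + (w - 1) / (w + 1) = 2 * w / (w + 1)" "1 - (w - 1) / (w + 1) = 2 / (w + 1)"
    using nz by (simp_all add: field_simps)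
  thus "cayley ((w - 1) / (w + 1)) = w"
    using nz by (simp add: cayley_def)
qed

lemma cayley_image_unit_disk: "cayley ` unit_disk = {w. Re w > 0}"
proof
  show "cayley ` unit_disk \<subseteq> {w. Re w > 0}"
    using Re_cayley_pos by auto
  show "{w. Re w > 0} \<subseteq> cayley ` unit_disk"
    using cayley_inverse by (force intro: image_eqI[OF sym])
qed

lemma inj_on_cayley: "inj_on cayley unit_disk"
proof (rule inj_on_inverseI)
  fix z :: complex assume "z \<in> unit_disk"
  thus "(cayley z - 1) / (cayley z + 1) = z"
    using unit_disk_nonzero[of z] by (simp add: cayley_def field_simps)
qed

definition psi :: "real \<Rightarrow> real \<Rightarrow> complex \<Rightarrow> complex" where
  "psi A B w = of_real A * w - of_real B / w"

lemma Re_psi: "Re (psi A B w) = A * Re w - B * Re w / (cmod w)\<^sup>2"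
  and Im_psi: "Im (psi A B w) = A * Im w + B * Im w / (cmod w)\<^sup>2"
  unfolding psi_def cmod_power2 by (simp_all add: Re_divide Im_divide)

lemma psi_eq_iff_quadratic:
  assumes "w \<noteq> 0"
  shows "psi A B w = \<eta> \<longleftrightarrow> of_real A * w\<^sup>2 - \<eta> * w - of_real B = 0"
  using assms unfolding psi_def by (auto simp: field_simps power2_eq_square)

lemma inj_on_psi:
  assumes "A \<ge> 0" "B \<ge> 0" "A + B > 0"
  shows "inj_on (psi A B) {w. Re w > 0}"
proof
  fix w1 w2 assume w: "w1 \<in> {w. Re w > 0}" "w2 \<in> {w. Re w > 0}" and eq: "psi A B w1 = psi A B w2"
  hence nz: "w1 \<noteq> 0" "w2 \<noteq> 0" by auto
  have "psi A B w1 - psi A B w2 = (w1 - w2) * (of_real A * (w1 * w2) + of_real B) / (w1 * w2)"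
    using nz unfolding psi_def by (simp add: field_simps)
  moreover have "of_real A * (w1 * w2) + of_real B \<noteq> 0"
  proof (cases "A = 0")
    case True thus ?thesis using assms by simp
  next
    case False
    hence "w1 * w2 \<noteq> - of_real (B / A)"
      using w assms by (intro right_half_plane_mult_neq_neg_real) auto
    with False show ?thesis
      by (auto simp: field_simps add_eq_0_iff)
  qed
  ultimately show "w1 = w2"
    using eq nz by simp
qed

lemma Im_psi_sq_less:
  assumes "A > 0" "Re w > 0" "Re (psi A B w) = 0"
  shows "(Im (psi A B w))\<^sup>2 < 4 * A * B"
proof -
  have N: "(cmod w)\<^sup>2 > 0" using assms(2) by auto
  have "Re w * (A - B / (cmod w)\<^sup>2) = 0"
    using assms(3) unfolding Re_psi by (simp add: algebra_simps)
  hence B: "B = A * (cmod w)\<^sup>2" using assms(2) N by (simp add: field_simps)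
  hence "Im (psi A B w) = 2 * A * Im w"
    unfolding Im_psi using N by simp
  hence "(Im (psi A B w))\<^sup>2 = (4 * A\<^sup>2) * (Im w)\<^sup>2"
    by (simp add: power_mult_distrib)
  also have "\<dots> < (4 * A\<^sup>2) * (cmod w)\<^sup>2"
    using assms(1,2) unfolding cmod_power2 by (intro mult_strict_left_mono) auto
  also have "\<dots> = 4 * A * B"
    unfolding B by (simp add: power2_eq_square)
  finally show ?thesis .
qed

lemma psi_quadratic_roots:
  fixes \<eta> :: complex and A B :: real
  assumes "A > 0"
  obtains w w' where "of_real A * w\<^sup>2 - \<eta> * w - of_real B = 0" "w * w' = - of_real (B / A)"
    "Re w' \<le> Re w" "Re \<eta> / (2 * A) \<le> Re w"
proof
  define s where "s = csqrt (\<eta>\<^sup>2 + of_real (4 * A * B))"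
  have cA: "(of_real A :: complex) \<noteq> 0" using assms by simp
  have s2: "s\<^sup>2 = \<eta>\<^sup>2 + of_real (4 * A * B)" unfolding s_def by simp
  have Res: "Re s \<ge> 0" unfolding s_def by (rule Re_csqrt)
  have "of_real A * ((\<eta> + s) / (2 * of_real A))\<^sup>2 - \<eta> * ((\<eta> + s) / (2 * of_real A)) - of_real B
      = (s\<^sup>2 - \<eta>\<^sup>2 - 4 * of_real A * of_real B) / (4 * of_real A)"
    using cA by (simp add: field_simps power2_eq_square)
  thus "of_real A * ((\<eta> + s) / (2 * of_real A))\<^sup>2 - \<eta> * ((\<eta> + s) / (2 * of_real A)) - of_real B = 0"
    unfolding s2 by simp
  have "(\<eta> + s) / (2 * of_real A) * ((\<eta> - s) / (2 * of_real A)) = (\<eta>\<^sup>2 - s\<^sup>2) / (4 * (of_real A)\<^sup>2)"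
    using cA by (simp add: field_simps power2_eq_square)
  thus "(\<eta> + s) / (2 * of_real A) * ((\<eta> - s) / (2 * of_real A)) = - of_real (B / A)"
    unfolding s2 using cA by (simp add: field_simps power2_eq_square)
  have Re_roots: "Re ((\<eta> + s) / (2 * of_real A)) = (Re \<eta> + Re s) / (2 * A)"
    "Re ((\<eta> - s) / (2 * of_real A)) = (Re \<eta> - Re s) / (2 * A)"
    by (simp_all add: Re_divide_of_real[symmetric])
  show "Re ((\<eta> - s) / (2 * of_real A)) \<le> Re ((\<eta> + s) / (2 * of_real A))"
    "Re \<eta> / (2 * A) \<le> Re ((\<eta> + s) / (2 * of_real A))"
    unfolding Re_roots using Res assms by (simp_all add: divide_right_mono)
qed

lemma psi_on_imaginary_axis:
  fixes w :: complex
  assumes "w \<noteq> 0" "Re w = 0" "A \<ge> 0" "B \<ge> 0"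
  shows "Re (psi A B w) = 0" "(Im (psi A B w))\<^sup>2 \<ge> 4 * A * B"
proof -
  define y where "y = Im w"
  have "y \<noteq> 0" "(cmod w)\<^sup>2 = y\<^sup>2"
    using assms(1,2) complex_eq_iff unfolding y_def cmod_power2 by auto
  show "Re (psi A B w) = 0"
    unfolding Re_psi using assms(2) by simp
  have "Im (psi A B w) = A * y + B / y"
    unfolding Im_psi \<open>(cmod w)\<^sup>2 = y\<^sup>2\<close> y_def[symmetric] using \<open>y \<noteq> 0\<close>
    by (simp add: power2_eq_square)
  moreover have "(A * y + B / y)\<^sup>2 = 4 * A * B + (A * y - B / y)\<^sup>2"
    using \<open>y \<noteq> 0\<close> by (simp add: power2_eq_square field_simps)
  ultimately show "(Im (psi A B w))\<^sup>2 \<ge> 4 * A * B"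
    by simp
qed

text \<open>For \<open>A, B > 0\<close>, \<open>psi A B\<close> maps the right half-plane onto the plane slit along
  \<open>{i y. |y| \<ge> 2 sqrt (A B)}\<close>; the root of larger real part is the preimage.\<close>
lemma psi_attains:
  fixes \<eta> :: complex and A B :: real
  assumes "A > 0" "B \<ge> 0" "B = 0 \<Longrightarrow> Re \<eta> > 0" "Re \<eta> = 0 \<Longrightarrow> (Im \<eta>)\<^sup>2 < 4 * A * B"
  shows "\<exists>w. Re w > 0 \<and> psi A B w = \<eta>"
proof -
  obtain w w' where quad: "of_real A * w\<^sup>2 - \<eta> * w - of_real B = 0"
    and prod: "w * w' = - of_real (B / A)" and "Re w' \<le> Re w" "Re \<eta> / (2 * A) \<le> Re w"
    using psi_quadratic_roots[OF assms(1)] .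
  have "Re w > 0"
  proof (cases "B = 0")
    case True
    with assms(1,3) \<open>Re \<eta> / (2 * A) \<le> Re w\<close> show ?thesis
      by (smt (verit) divide_pos_pos)
  next
    case False
    hence B: "B > 0" using assms(2) by simp
    hence "w \<noteq> 0" using prod assms(1) by auto
    show ?thesis
    proof (rule ccontr)
      assume "\<not> Re w > 0"
      have "Re w = 0"
      proof (rule ccontr)
        assume "Re w \<noteq> 0"
        hence "Re (- w) > 0" "Re (- w') > 0"
          using \<open>\<not> Re w > 0\<close> \<open>Re w' \<le> Re w\<close> by auto
        hence "(- w) * (- w') \<noteq> - of_real (B / A)"
          using assms(1) B by (intro right_half_plane_mult_neq_neg_real) auto
        thus False using prod by simp
      qed
      moreover have "psi A B w = \<eta>"
        using psi_eq_iff_quadratic[OF \<open>w \<noteq> 0\<close>] quad by blast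
      ultimately have "Re \<eta> = 0" "(Im \<eta>)\<^sup>2 \<ge> 4 * A * B"
        using psi_on_imaginary_axis[OF \<open>w \<noteq> 0\<close>, of A B] assms(1,2) by auto
      with assms(4) show False
        by simp
    qed
  qed
  hence "w \<noteq> 0" by auto
  with quad have "psi A B w = \<eta>"
    using psi_eq_iff_quadratic by blast
  with \<open>Re w > 0\<close> show ?thesis by blast
qed

lemma psi_0_attains:
  fixes \<eta> :: complex and B :: real
  assumes "B > 0" "Re \<eta> < 0"
  shows "\<exists>w. Re w > 0 \<and> psi 0 B w = \<eta>"
proof (intro exI conjI)
  have "\<eta> \<noteq> 0" using assms(2) by auto
  show "psi 0 B (- of_real B / \<eta>) = \<eta>"
    using assms(1) \<open>\<eta> \<noteq> 0\<close> by (simp add: psi_def)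
  have "Re (- of_real B / \<eta>) = - B * Re \<eta> / (cmod \<eta>)\<^sup>2"
    unfolding cmod_power2 by (simp add: Re_divide)
  thus "Re (- of_real B / \<eta>) > 0"
    using assms \<open>\<eta> \<noteq> 0\<close> by (simp add: mult_pos_neg divide_neg_pos)
qed

lemma sq_less_on_closed_segment:
  fixes x y z K :: real
  assumes "z \<in> closed_segment x y" "x\<^sup>2 < K" "y\<^sup>2 < K"
  shows "z\<^sup>2 < K"
proof -
  have "\<bar>z\<bar> \<le> \<bar>x\<bar> \<or> \<bar>z\<bar> \<le> \<bar>y\<bar>"
    using assms(1) by (auto simp: closed_segment_eq_real_ivl split: if_splits)
  thus ?thesis
    using assms(2,3) abs_le_square_iff by (metis le_less_trans)
qed

lemma vertically_convex_psi_image: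
  assumes "A \<ge> 0" "B \<ge> 0" "A + B > 0"
  shows "vertically_convex (psi A B ` {w. Re w > 0})"
  unfolding vertically_convex_def
proof (intro ballI impI subsetI)
  fix a b \<eta> assume "a \<in> psi A B ` {w. Re w > 0}" "b \<in> psi A B ` {w. Re w > 0}"
    and "Re a = Re b" "\<eta> \<in> closed_segment a b"
  then obtain w1 w2 where w: "Re w1 > 0" "Re w2 > 0" and ab: "a = psi A B w1" "b = psi A B w2"
    and \<eta>: "Re \<eta> = Re a" "Im \<eta> \<in> closed_segment (Im a) (Im b)"
    by (auto simp: closed_segment_vertical)
  have N: "(cmod w1)\<^sup>2 > 0" using w(1) by auto
  show "\<eta> \<in> psi A B ` {w. Re w > 0}"
  proof (cases "A = 0")
    case True
    have "Re \<eta> < 0"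
      using True assms w(1) N unfolding \<eta>(1) ab Re_psi by simp
    with True assms show ?thesis
      using psi_0_attains by fastforce
  next
    case False
    hence A: "A > 0" using assms(1) by simp
    have "Re \<eta> > 0" if "B = 0"
      using that A w(1) unfolding \<eta>(1) ab Re_psi by simp
    moreover have "(Im \<eta>)\<^sup>2 < 4 * A * B" if "Re \<eta> = 0"
      using sq_less_on_closed_segment[OF \<eta>(2)] Im_psi_sq_less[OF A] w that \<open>Re a = Re b\<close>
      unfolding \<eta>(1) ab by metis
    ultimately show ?thesis
      using psi_attains[OF A assms(2)] by blast
  qed
qed

definition phi :: "real \<Rightarrow> complex \<Rightarrow> complex" where
  "phi \<alpha> z = z * (1 - of_real \<alpha> * z) / (1 - z\<^sup>2)"

lemma phi_eq_psi_cayley: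
  assumes "z \<in> unit_disk"
  shows "phi \<alpha> z = of_real (1 / 4) * psi (1 - \<alpha>) (1 + \<alpha>) (cayley z) + of_real (\<alpha> / 2)"
proof -
  have "1 - z \<noteq> 0" "1 + z \<noteq> 0"
    using unit_disk_nonzero assms by auto
  moreover have "1 - z * z = (1 - z) * (1 + z)"
    by (simp add: algebra_simps)
  ultimately have "1 - z * z \<noteq> 0"
    by simp
  with \<open>1 - z \<noteq> 0\<close> \<open>1 + z \<noteq> 0\<close> show ?thesis
    unfolding phi_def psi_def cayley_def by (simp add: field_simps power2_eq_square)
qed

lemma phi_image_unit_disk:
  "phi \<alpha> ` unit_disk
     = (\<lambda>\<zeta>. of_real (1 / 4) * \<zeta> + of_real (\<alpha> / 2)) ` psi (1 - \<alpha>) (1 + \<alpha>) ` {w. Re w > 0}"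
  unfolding cayley_image_unit_disk[symmetric] image_image
  by (rule image_cong) (simp_all add: phi_eq_psi_cayley)

lemma inj_on_phi:
  assumes "\<alpha> \<in> {-1..1}"
  shows "inj_on (phi \<alpha>) unit_disk"
proof -
  have "inj_on ((\<lambda>\<zeta>. of_real (1 / 4) * \<zeta> + of_real (\<alpha> / 2)) \<circ> psi (1 - \<alpha>) (1 + \<alpha>) \<circ> cayley) unit_disk"
  proof (intro comp_inj_on)
    show "inj_on cayley unit_disk" by (rule inj_on_cayley)
    show "inj_on (psi (1 - \<alpha>) (1 + \<alpha>)) (cayley ` unit_disk)"
      unfolding cayley_image_unit_disk using assms by (intro inj_on_psi) auto
    show "inj_on (\<lambda>\<zeta>. of_real (1 / 4) * \<zeta> + of_real (\<alpha> / 2)) (psi (1 - \<alpha>) (1 + \<alpha>) ` cayley ` unit_disk)"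
      by (rule inj_onI) simp
  qed
  thus ?thesis
    by (rule inj_on_cong[THEN iffD1, rotated]) (simp add: phi_eq_psi_cayley)
qed

lemma vertically_convex_phi_image:
  assumes "\<alpha> \<in> {-1..1}"
  shows "vertically_convex (phi \<alpha> ` unit_disk)"
  unfolding phi_image_unit_disk
  using assms by (intro vertically_convex_affine_image vertically_convex_psi_image) auto

lemma convex_combination_vertical_shear:
  fixes h1 g1 h2 g2 :: "complex \<Rightarrow> complex" and \<alpha> t :: real
  assumes "\<alpha> \<in> {-1..1}" "S_H h1 g1" "S_H h2 g2"
    and "\<And>z. z \<in> unit_disk \<Longrightarrow> h1 z + g1 z = phi \<alpha> z"
    and "\<And>z. z \<in> unit_disk \<Longrightarrow> h2 z + g2 z = phi \<alpha> z"
    and "0 \<le> t" "t \<le> 1"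
  shows "vertical_shear unit_disk (\<lambda>z. of_real t * h1 z + of_real (1 - t) * h2 z)
                                 (\<lambda>z. of_real t * g1 z + of_real (1 - t) * g2 z)"
proof
  define h where "h z = of_real t * h1 z + of_real (1 - t) * h2 z" for z
  define g where "g z = of_real t * g1 z + of_real (1 - t) * g2 z" for z
  have holo: "h1 holomorphic_on unit_disk" "g1 holomorphic_on unit_disk"
    "h2 holomorphic_on unit_disk" "g2 holomorphic_on unit_disk"
    and sense_pres: "sense_preserving h1 g1" "sense_preserving h2 g2"
    using assms(2,3) unfolding S_H_def by auto
  show "h holomorphic_on unit_disk" "g holomorphic_on unit_disk"
    unfolding h_def g_def using holo by (auto intro!: holomorphic_intros)
  have "h z + g z = of_real t * (h1 z + g1 z) + of_real (1 - t) * (h2 z + g2 z)" for z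
    unfolding h_def g_def by (simp add: algebra_simps)
  hence sum: "h z + g z = phi \<alpha> z" if "z \<in> unit_disk" for z
    using assms(4,5)[OF that] by (simp flip: distrib_right)
  have "inj_on (\<lambda>z. h z + g z) unit_disk \<longleftrightarrow> inj_on (phi \<alpha>) unit_disk"
    by (rule inj_on_cong) (simp add: sum)
  thus "inj_on (\<lambda>z. h z + g z) unit_disk"
    using inj_on_phi[OF assms(1)] by simp
  have "(\<lambda>z. h z + g z) ` unit_disk = phi \<alpha> ` unit_disk"
    by (rule image_cong) (simp_all add: sum)
  thus "vertically_convex ((\<lambda>z. h z + g z) ` unit_disk)"
    using vertically_convex_phi_image[OF assms(1)] by simp
  have "sense_preserving h g"
    unfolding h_def[abs_def] g_def[abs_def] using holo sense_pres assms(4-7)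
    by (intro sense_preserving_convex_combination) auto
  thus "\<And>z. z \<in> unit_disk \<Longrightarrow> deriv h z \<noteq> 0 \<and> cmod (deriv g z / deriv h z) < 1"
    unfolding sense_preserving_def by blast
qed simp

lemma S_H_convex_combination_normalized:
  fixes h1 g1 h2 g2 :: "complex \<Rightarrow> complex" and t :: real
  assumes "S_H h1 g1" "S_H h2 g2"
  shows "of_real t * h1 0 + of_real (1 - t) * h2 0 = 0"
    and "of_real t * g1 0 + of_real (1 - t) * g2 0 = 0"
    and "deriv (\<lambda>z. of_real t * h1 z + of_real (1 - t) * h2 z) 0 = 1"
proof -
  have "deriv (\<lambda>z. of_real t * h1 z + of_real (1 - t) * h2 z) 0
      = of_real t * deriv h1 0 + of_real (1 - t) * deriv h2 0"
    using assms unfolding S_H_def by (intro deriv_convex_combination) auto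
  thus "deriv (\<lambda>z. of_real t * h1 z + of_real (1 - t) * h2 z) 0 = 1"
    using assms unfolding S_H_def by (simp flip: distrib_right of_real_add)
  show "of_real t * h1 0 + of_real (1 - t) * h2 0 = 0" "of_real t * g1 0 + of_real (1 - t) * g2 0 = 0"
    using assms unfolding S_H_def by simp_all
qed

lemma S_H_if_vertical_shear:
  assumes "vertical_shear unit_disk h g" and "h 0 = 0" "g 0 = 0" "deriv h 0 = 1"
  shows "S_H h g"
proof -
  interpret vertical_shear unit_disk h g by fact
  show ?thesis
    unfolding S_H_def sense_preserving_def
    using holomorphic_h holomorphic_g inj_on_harm dilatation_lt_1 assms(2-4) by blast
qed

theorem theorem2p3:
  fixes h1 g1 h2 g2 :: "complex \<Rightarrow> complex" and \<alpha>1 \<alpha>2 t :: real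
  assumes "\<alpha>1 \<in> {-1..1}" and "\<alpha>2 \<in> {-1..1}"
    and "S_H h1 g1" and "S_H h2 g2"
    and "\<And>z. z \<in> unit_disk \<Longrightarrow> h1 z + g1 z = z * (1 - of_real \<alpha>1 * z) / (1 - z\<^sup>2)"
    and "\<And>z. z \<in> unit_disk \<Longrightarrow> h2 z + g2 z = z * (1 - of_real \<alpha>2 * z) / (1 - z\<^sup>2)"
    and "\<alpha>1 = \<alpha>2"
    and "0 \<le> t" and "t \<le> 1"
  shows "S_H (\<lambda>z. of_real t * h1 z + of_real (1 - t) * h2 z)
             (\<lambda>z. of_real t * g1 z + of_real (1 - t) * g2 z)
       \<and> open (harm (\<lambda>z. of_real t * h1 z + of_real (1 - t) * h2 z)
                    (\<lambda>z. of_real t * g1 z + of_real (1 - t) * g2 z) ` unit_disk)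
       \<and> connected (harm (\<lambda>z. of_real t * h1 z + of_real (1 - t) * h2 z)
                    (\<lambda>z. of_real t * g1 z + of_real (1 - t) * g2 z) ` unit_disk)
       \<and> convex_imag_dir (harm (\<lambda>z. of_real t * h1 z + of_real (1 - t) * h2 z)
                    (\<lambda>z. of_real t * g1 z + of_real (1 - t) * g2 z) ` unit_disk)"
proof -
  have phi_sums: "h1 z + g1 z = phi \<alpha>1 z" "h2 z + g2 z = phi \<alpha>1 z" if "z \<in> unit_disk" for z
    using assms(5-7) that unfolding phi_def by auto
  note shear = convex_combination_vertical_shear[OF assms(1,3,4) phi_sums assms(8,9)]
  interpret vertical_shear unit_disk "\<lambda>z. of_real t * h1 z + of_real (1 - t) * h2 z"
    "\<lambda>z. of_real t * g1 z + of_real (1 - t) * g2 z"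
    by (rule shear)
  show ?thesis
    using S_H_if_vertical_shear[OF shear S_H_convex_combination_normalized[OF assms(3,4)]]
      open_harm_image connected_continuous_image[OF continuous_on_harm connected_ball]
      vertically_convex_imp_convex_imag_dir[OF vertically_convex_harm_image]
    by blast
qed

end
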